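(* Let $G$ be a connected cubic graph on $n$ vertices with $n\equiv 0\pmod 4$. If $G$ has a Xuong tree whose cotree has a unique odd component and this component has at least three edges, then $G$ admits a coherent stable decycling partition, i.e. a partition $\{A,J\}$ of $V(G)$ such that $G[A]$ is a tree and $J$ is independent or near-independent.
   Context: Graphs are finite; loops and multiple edges allowed; a cubic graph is $3$-regular. For connected $G$, $\beta(G)=|E(G)|-|V(G)|+1$; $\gamma_M(G)$ is the largest genus of a closed orientable surface on which $G$ has a cellular embedding; $\xi(G)=\beta(G)-2\gamma_M(G)$. For a spanning tree $T$ the cotree is $G-E(T)$; a component is odd if it has an odd number of edges; $T$ is a Xuong tree if its cotree has exactly $\xi(G)$ odd components. $J$ is independent if $G[J]$ has no edges and near-independent if $G[J]$ has exactly one edge. *)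

theory Defs
  imports Main "HOL-Combinatorics.Permutations"
begin

text \<open>A finite multigraph (loops and parallel edges allowed) is given by a vertex set V,
an edge set E and two endpoint maps src, tgt (an arbitrary reference orientation;
a loop is an edge e with src e = tgt e).\<close>

definition multigraph :: "'v set \<Rightarrow> 'e set \<Rightarrow> ('e \<Rightarrow> 'v) \<Rightarrow> ('e \<Rightarrow> 'v) \<Rightarrow> bool" where
  "multigraph V E src tgt \<longleftrightarrow> finite V \<and> finite E \<and> (\<forall>e\<in>E. src e \<in> V \<and> tgt e \<in> V)"

text \<open>Degree: a loop contributes 2.\<close>
definition degree :: "'e set \<Rightarrow> ('e \<Rightarrow> 'v) \<Rightarrow> ('e \<Rightarrow> 'v) \<Rightarrow> 'v \<Rightarrow> nat" where
  "degree E src tgt v = card {e\<in>E. src e = v} + card {e\<in>E. tgt e = v}"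

definition cubic :: "'v set \<Rightarrow> 'e set \<Rightarrow> ('e \<Rightarrow> 'v) \<Rightarrow> ('e \<Rightarrow> 'v) \<Rightarrow> bool" where
  "cubic V E src tgt \<longleftrightarrow> (\<forall>v\<in>V. degree E src tgt v = 3)"

definition reach :: "'e set \<Rightarrow> ('e \<Rightarrow> 'v) \<Rightarrow> ('e \<Rightarrow> 'v) \<Rightarrow> ('v \<times> 'v) set" where
  "reach F src tgt = ({(src e, tgt e) | e. e \<in> F} \<union> {(tgt e, src e) | e. e \<in> F})\<^sup>*"

definition connected_graph :: "'v set \<Rightarrow> 'e set \<Rightarrow> ('e \<Rightarrow> 'v) \<Rightarrow> ('e \<Rightarrow> 'v) \<Rightarrow> bool" where
  "connected_graph V F src tgt \<longleftrightarrow> V \<noteq> {} \<and> (\<forall>u\<in>V. \<forall>v\<in>V. (u, v) \<in> reach F src tgt)"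

text \<open>The graph (V, F) is acyclic: every edge is a bridge (a loop is never a bridge).\<close>
definition acyclic_graph :: "'e set \<Rightarrow> ('e \<Rightarrow> 'v) \<Rightarrow> ('e \<Rightarrow> 'v) \<Rightarrow> bool" where
  "acyclic_graph F src tgt \<longleftrightarrow> (\<forall>e\<in>F. (src e, tgt e) \<notin> reach (F - {e}) src tgt)"

definition is_tree :: "'v set \<Rightarrow> 'e set \<Rightarrow> ('e \<Rightarrow> 'v) \<Rightarrow> ('e \<Rightarrow> 'v) \<Rightarrow> bool" where
  "is_tree V F src tgt \<longleftrightarrow> connected_graph V F src tgt \<and> acyclic_graph F src tgt"

definition spanning_tree :: "'v set \<Rightarrow> 'e set \<Rightarrow> ('e \<Rightarrow> 'v) \<Rightarrow> ('e \<Rightarrow> 'v) \<Rightarrow> 'e set \<Rightarrow> bool" where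
  "spanning_tree V E src tgt T \<longleftrightarrow> T \<subseteq> E \<and> is_tree V T src tgt"

definition induced_edges :: "'e set \<Rightarrow> ('e \<Rightarrow> 'v) \<Rightarrow> ('e \<Rightarrow> 'v) \<Rightarrow> 'v set \<Rightarrow> 'e set" where
  "induced_edges E src tgt A = {e\<in>E. src e \<in> A \<and> tgt e \<in> A}"

definition components :: "'v set \<Rightarrow> 'e set \<Rightarrow> ('e \<Rightarrow> 'v) \<Rightarrow> ('e \<Rightarrow> 'v) \<Rightarrow> 'v set set" where
  "components V F src tgt = {{v\<in>V. (u, v) \<in> reach F src tgt} | u. u \<in> V}"

definition odd_cotree_components ::
  "'v set \<Rightarrow> 'e set \<Rightarrow> ('e \<Rightarrow> 'v) \<Rightarrow> ('e \<Rightarrow> 'v) \<Rightarrow> 'e set \<Rightarrow> 'v set set" where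
  "odd_cotree_components V E src tgt T =
     {K \<in> components V (E - T) src tgt. odd (card (induced_edges (E - T) src tgt K))}"

text \<open>Darts: (e, True) is the end of e at src e, (e, False) the end at tgt e.\<close>
definition darts :: "'e set \<Rightarrow> ('e \<times> bool) set" where
  "darts E = E \<times> UNIV"

definition dart_vertex :: "('e \<Rightarrow> 'v) \<Rightarrow> ('e \<Rightarrow> 'v) \<Rightarrow> 'e \<times> bool \<Rightarrow> 'v" where
  "dart_vertex src tgt d = (if snd d then src (fst d) else tgt (fst d))"

definition dart_flip :: "'e \<times> bool \<Rightarrow> 'e \<times> bool" where
  "dart_flip d = (fst d, \<not> snd d)"

definition rotation_system ::
  "'e set \<Rightarrow> ('e \<Rightarrow> 'v) \<Rightarrow> ('e \<Rightarrow> 'v) \<Rightarrow> ('e \<times> bool \<Rightarrow> 'e \<times> bool) \<Rightarrow> bool" where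
  "rotation_system E src tgt \<rho> \<longleftrightarrow>
     \<rho> permutes darts E \<and>
     (\<forall>d\<in>darts E. dart_vertex src tgt (\<rho> d) = dart_vertex src tgt d) \<and>
     (\<forall>d\<in>darts E. \<forall>d'\<in>darts E. dart_vertex src tgt d = dart_vertex src tgt d' \<longrightarrow>
        (\<exists>k. (\<rho> ^^ k) d = d'))"

definition num_faces :: "'e set \<Rightarrow> ('e \<times> bool \<Rightarrow> 'e \<times> bool) \<Rightarrow> nat" where
  "num_faces E \<rho> = card {{d'. \<exists>k. ((\<rho> \<circ> dart_flip) ^^ k) d = d'} | d. d \<in> darts E}"

text \<open>Genus of the cellular embedding given by a rotation system (Euler's formula).\<close>
definition embedding_genus :: "'v set \<Rightarrow> 'e set \<Rightarrow> ('e \<times> bool \<Rightarrow> 'e \<times> bool) \<Rightarrow> int" where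
  "embedding_genus V E \<rho> = (2 - int (card V) + int (card E) - int (num_faces E \<rho>)) div 2"

definition max_genus :: "'v set \<Rightarrow> 'e set \<Rightarrow> ('e \<Rightarrow> 'v) \<Rightarrow> ('e \<Rightarrow> 'v) \<Rightarrow> int" where
  "max_genus V E src tgt = Max {embedding_genus V E \<rho> | \<rho>. rotation_system E src tgt \<rho>}"

definition betti :: "'v set \<Rightarrow> 'e set \<Rightarrow> int" where
  "betti V E = int (card E) - int (card V) + 1"

definition xi :: "'v set \<Rightarrow> 'e set \<Rightarrow> ('e \<Rightarrow> 'v) \<Rightarrow> ('e \<Rightarrow> 'v) \<Rightarrow> int" where
  "xi V E src tgt = betti V E - 2 * max_genus V E src tgt"

definition xuong_tree :: "'v set \<Rightarrow> 'e set \<Rightarrow> ('e \<Rightarrow> 'v) \<Rightarrow> ('e \<Rightarrow> 'v) \<Rightarrow> 'e set \<Rightarrow> bool" where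
  "xuong_tree V E src tgt T \<longleftrightarrow> spanning_tree V E src tgt T \<and>
     int (card (odd_cotree_components V E src tgt T)) = xi V E src tgt"

definition independent_set :: "'e set \<Rightarrow> ('e \<Rightarrow> 'v) \<Rightarrow> ('e \<Rightarrow> 'v) \<Rightarrow> 'v set \<Rightarrow> bool" where
  "independent_set E src tgt J \<longleftrightarrow> induced_edges E src tgt J = {}"

definition near_independent_set :: "'e set \<Rightarrow> ('e \<Rightarrow> 'v) \<Rightarrow> ('e \<Rightarrow> 'v) \<Rightarrow> 'v set \<Rightarrow> bool" where
  "near_independent_set E src tgt J \<longleftrightarrow> card (induced_edges E src tgt J) = 1"

definition coherent_stable_decycling_partition ::
  "'v set \<Rightarrow> 'e set \<Rightarrow> ('e \<Rightarrow> 'v) \<Rightarrow> ('e \<Rightarrow> 'v) \<Rightarrow> 'v set \<Rightarrow> 'v set \<Rightarrow> bool" where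
  "coherent_stable_decycling_partition V E src tgt A J \<longleftrightarrow>
     A \<union> J = V \<and> A \<inter> J = {} \<and> A \<noteq> {} \<and> J \<noteq> {} \<and>
     is_tree A (induced_edges E src tgt A) src tgt \<and>
     (independent_set E src tgt J \<or> near_independent_set E src tgt J)"

end

(*
  Let C = E - T be the cotree. Since |V| >= 3 every vertex meets the spanning tree T, so in the
  cubic graph every vertex has cotree degree at most 2 and the components of C are paths and
  cycles. None of them consists of a single edge (not even a loop): it would be an odd component
  with fewer than three edges.

  A path or cycle with m edges, m <> 1, has a set J of vertices of degree 2 meeting every edge
  such that exactly (m mod 2) edges have both ends in J: remove a vertex of degree 2 next to a leaf
  (or any vertex of a cycle) together with its two edges and use induction.

  The union J of these sets over all components meets every cotree edge and contains exactly one
  cotree edge, coming from the unique odd component. Its vertices have cotree degree 2, hence are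
  leaves of T; two leaves of T are not adjacent in T as |V| > 2. So G[J] has exactly one edge, and
  G[V - J] is T with some leaves removed, a tree.
*)

theory Submission
  imports Defs
begin

context
  fixes src tgt :: "'e \<Rightarrow> 'v"
begin

definition incident :: "'e set \<Rightarrow> 'v \<Rightarrow> 'e set" where
  "incident F x = {e\<in>F. src e = x \<or> tgt e = x}"

definition loopless :: "'e set \<Rightarrow> bool" where
  "loopless F \<longleftrightarrow> (\<forall>e\<in>F. src e \<noteq> tgt e)"

lemma reach_refl: "(x, x) \<in> reach F src tgt"
  unfolding reach_def by simp

lemma reach_edge:
  assumes "e \<in> F"
  shows "(src e, tgt e) \<in> reach F src tgt" and "(tgt e, src e) \<in> reach F src tgt"
  using assms unfolding reach_def by auto

lemma reach_trans:
  "(x, y) \<in> reach F src tgt \<Longrightarrow> (y, z) \<in> reach F src tgt \<Longrightarrow> (x, z) \<in> reach F src tgt"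
  unfolding reach_def by (rule rtrancl_trans)

lemma reach_mono: "F \<subseteq> F' \<Longrightarrow> reach F src tgt \<subseteq> reach F' src tgt"
  unfolding reach_def by (rule rtrancl_mono) blast

lemma reach_induct [consumes 1, case_names base step]:
  assumes "(x, y) \<in> reach F src tgt" and "P x"
    and "\<And>y z e. (x, y) \<in> reach F src tgt \<Longrightarrow> P y \<Longrightarrow> e \<in> F \<Longrightarrow>
           (src e = y \<and> tgt e = z) \<or> (src e = z \<and> tgt e = y) \<Longrightarrow> P z"
  shows "P y"
  using assms(1) unfolding reach_def
proof (induction rule: rtrancl_induct)
  case base
  show ?case by (rule assms(2))
next
  case (step y z)
  from step.hyps(2) obtain e
    where e: "e \<in> F" "(src e = y \<and> tgt e = z) \<or> (src e = z \<and> tgt e = y)"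
    by blast
  have "(x, y) \<in> reach F src tgt"
    using step.hyps(1) unfolding reach_def .
  from assms(3)[OF this step.IH e] show ?case .
qed

lemma reach_sym: "(x, y) \<in> reach F src tgt \<Longrightarrow> (y, x) \<in> reach F src tgt"
proof (induction rule: reach_induct)
  case base
  show ?case by (rule reach_refl)
next
  case (step y z e)
  then have "(z, y) \<in> reach F src tgt"
    using reach_edge[OF step.hyps(2)] by auto
  then show ?case
    using step.IH by (rule reach_trans)
qed

lemma reach_incident_nonempty:
  assumes "(x, y) \<in> reach F src tgt" and "x \<noteq> y"
  shows "incident F x \<noteq> {}"
proof -
  from assms(1) have "y = x \<or> incident F x \<noteq> {}"
  proof (induction rule: reach_induct)
    case base
    show ?case by simp
  next
    case (step y z e)
    then show ?case
      unfolding incident_def by blast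
  qed
  with assms(2) show ?thesis by simp
qed

lemma connected_graph_incident_nonempty:
  assumes "connected_graph K F src tgt" "x \<in> K" "y \<in> K" "x \<noteq> y"
  shows "incident F x \<noteq> {}"
  using assms reach_incident_nonempty unfolding connected_graph_def by blast

lemma connected_graph_incident_nonempty_loopless:
  assumes ends: "\<forall>e\<in>F. src e \<in> K \<and> tgt e \<in> K" and "loopless F"
    and conn: "connected_graph K F src tgt" and "F \<noteq> {}" and "x \<in> K"
  shows "incident F x \<noteq> {}"
proof -
  obtain g where "g \<in> F"
    using \<open>F \<noteq> {}\<close> by blast
  then have "src g \<in> K" "tgt g \<in> K" "src g \<noteq> tgt g"
    using ends \<open>loopless F\<close> unfolding loopless_def by auto
  then obtain y where "y \<in> K" "y \<noteq> x"
    by metis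
  then show ?thesis
    using connected_graph_incident_nonempty[OF conn \<open>x \<in> K\<close>] by blast
qed

lemma reach_remove_edge:
  assumes "e \<in> F" and "(src e, tgt e) \<in> reach (F - {e}) src tgt"
  shows "reach F src tgt = reach (F - {e}) src tgt"
proof
  show "reach F src tgt \<subseteq> reach (F - {e}) src tgt"
  proof clarify
    fix x y
    assume "(x, y) \<in> reach F src tgt"
    then show "(x, y) \<in> reach (F - {e}) src tgt"
    proof (induction rule: reach_induct)
      case base
      show ?case by (rule reach_refl)
    next
      case (step y z g)
      have "(y, z) \<in> reach (F - {e}) src tgt"
      proof (cases "g = e")
        case True
        then show ?thesis
          using assms(2) reach_sym[OF assms(2)] step.hyps(3) by auto
      next
        case False
        then have g: "g \<in> F - {e}"
          using step.hyps(2) by blast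
        show ?thesis
          using reach_edge[OF g] step.hyps(3) by auto
      qed
      with step.IH show ?case
        by (rule reach_trans)
    qed
  qed
  show "reach (F - {e}) src tgt \<subseteq> reach F src tgt"
    by (rule reach_mono) blast
qed

lemma finite_incident: "finite F \<Longrightarrow> finite (incident F x)"
  unfolding incident_def by simp

lemma incident_mono: "F \<subseteq> F' \<Longrightarrow> incident F x \<subseteq> incident F' x"
  unfolding incident_def by blast

lemma incident_Diff: "incident (F - X) x = incident F x - X"
  unfolding incident_def by blast

lemma card_incident_split:
  assumes "finite E" "T \<subseteq> E"
  shows "card (incident E x) = card (incident T x) + card (incident (E - T) x)"
proof -
  have "incident E x = incident T x \<union> incident (E - T) x"
    using assms(2) unfolding incident_def by blast
  moreover have "incident T x \<inter> incident (E - T) x = {}"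
    unfolding incident_def by blast
  ultimately show ?thesis
    using assms by (simp add: card_Un_disjoint finite_incident finite_subset)
qed

lemma degree_eq_card_incident_plus_loops:
  assumes "finite F"
  shows "degree F src tgt x = card (incident F x) + card {e\<in>F. src e = x \<and> tgt e = x}"
proof -
  have "incident F x = {e\<in>F. src e = x} \<union> {e\<in>F. tgt e = x}"
    and "{e\<in>F. src e = x \<and> tgt e = x} = {e\<in>F. src e = x} \<inter> {e\<in>F. tgt e = x}"
    unfolding incident_def by blast+
  then show ?thesis
    unfolding degree_def using assms by (simp only:) (rule card_Un_Int; simp)
qed

lemma degree_eq_card_incident:
  assumes "finite F" "loopless F"
  shows "degree F src tgt x = card (incident F x)"
proof -
  have "{e\<in>F. src e = x \<and> tgt e = x} = {}"
    using assms(2) unfolding loopless_def by auto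
  then show ?thesis
    unfolding degree_eq_card_incident_plus_loops[OF assms(1)] by (simp only: card.empty add_0_right)
qed

lemma even_degree_sum_closed:
  assumes "finite F" "finite S" and closed: "\<forall>e\<in>F. src e \<in> S \<longleftrightarrow> tgt e \<in> S"
  shows "even (\<Sum>x\<in>S. degree F src tgt x)"
proof -
  have fibres: "(\<Sum>x\<in>S. card {e\<in>F. f e = x}) = card {e\<in>F. f e \<in> S}" for f :: "'e \<Rightarrow> 'v"
  proof -
    have "card (\<Union>x\<in>S. {e\<in>F. f e = x}) = (\<Sum>x\<in>S. card {e\<in>F. f e = x})"
      by (rule card_UN_disjoint) (use assms(1,2) in auto)
    moreover have "(\<Union>x\<in>S. {e\<in>F. f e = x}) = {e\<in>F. f e \<in> S}"
      by blast
    ultimately show ?thesis by simp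
  qed
  have "(\<Sum>x\<in>S. degree F src tgt x) = card {e\<in>F. src e \<in> S} + card {e\<in>F. tgt e \<in> S}"
    by (simp add: degree_def sum.distrib fibres)
  also have "{e\<in>F. tgt e \<in> S} = {e\<in>F. src e \<in> S}"
    using closed by blast
  finally show ?thesis by simp
qed

lemma connected_graph_remove_leaves:
  assumes ends: "\<forall>e\<in>F. src e \<in> K \<and> tgt e \<in> K" and "loopless F"
    and conn: "connected_graph K F src tgt"
    and leaves: "\<forall>x\<in>L. \<exists>g. incident F x = {g}"
    and "K - L \<noteq> {}"
  shows "connected_graph (K - L) (induced_edges F src tgt (K - L)) src tgt"
proof -
  let ?F' = "induced_edges F src tgt (K - L)"
  \<comment> \<open>A walk from \<open>u\<close> that enters a leaf can only return along the same edge.\<close>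
  have "(u, x) \<in> reach ?F' src tgt" if u: "u \<in> K - L" and x: "x \<in> K - L" for u x
  proof -
    have "(u, x) \<in> reach F src tgt"
      using conn u x unfolding connected_graph_def by blast
    then have "(x \<notin> L \<longrightarrow> (u, x) \<in> reach ?F' src tgt) \<and>
      (x \<in> L \<longrightarrow> (\<exists>y. y \<notin> L \<and> (u, y) \<in> reach ?F' src tgt \<and>
                     (\<forall>g\<in>incident F x. src g = y \<or> tgt g = y)))"
    proof (induction rule: reach_induct)
      case base
      show ?case using u by (simp add: reach_refl)
    next
      case (step v x g)
      have g_at_v: "g \<in> incident F v" and g_at_x: "g \<in> incident F x"
        using step.hyps(2,3) unfolding incident_def by auto
      show ?case
      proof (cases "v \<in> L")
        case True
        then obtain y where y: "y \<notin> L" "(u, y) \<in> reach ?F' src tgt"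
          and g_at_y: "src g = y \<or> tgt g = y"
          using step.IH g_at_v by blast
        have "src g \<noteq> tgt g"
          using \<open>loopless F\<close> step.hyps(2) unfolding loopless_def by blast
        with g_at_y step.hyps(3) have "x = y"
          using True y(1) by auto
        then show ?thesis using y by simp
      next
        case False
        then have uv: "(u, v) \<in> reach ?F' src tgt"
          using step.IH by blast
        show ?thesis
        proof (cases "x \<in> L")
          case True
          then have "incident F x = {g}"
            using leaves g_at_x by fastforce
          then show ?thesis using True False uv step.hyps(3) by auto
        next
          case x_notin: False
          have "g \<in> ?F'"
            using step.hyps(2,3) ends False x_notin unfolding induced_edges_def by auto
          then have "(v, x) \<in> reach ?F' src tgt"
            using reach_edge[of g ?F'] step.hyps(3) by auto
          then show ?thesis using uv x_notin reach_trans by blast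
        qed
      qed
    qed
    then show ?thesis using x by blast
  qed
  then show ?thesis
    using \<open>K - L \<noteq> {}\<close> unfolding connected_graph_def by blast
qed

lemma connected_graph_remove_leaf:
  assumes ends: "\<forall>e\<in>F. src e \<in> K \<and> tgt e \<in> K" and "loopless F"
    and conn: "connected_graph K F src tgt"
    and leaf: "incident F v = {e}" and "K \<noteq> {v}"
  shows "connected_graph (K - {v}) (F - {e}) src tgt"
proof -
  have "induced_edges F src tgt (K - {v}) = F - {e}"
    using ends leaf unfolding induced_edges_def incident_def by blast
  moreover have "K - {v} \<noteq> {}"
    using conn \<open>K \<noteq> {v}\<close> unfolding connected_graph_def by blast
  ultimately show ?thesis
    using connected_graph_remove_leaves[OF ends \<open>loopless F\<close> conn, of "{v}"] leaf by simp
qed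

lemma connected_graph_remove_edge_2_regular:
  assumes "finite K" "finite F" and ends: "\<forall>e\<in>F. src e \<in> K \<and> tgt e \<in> K"
    and "loopless F" and conn: "connected_graph K F src tgt"
    and e: "e \<in> F" and regular: "\<forall>x\<in>K. card (incident F x) = 2"
  shows "connected_graph K (F - {e}) src tgt"
proof -
  let ?F' = "F - {e}"
  \<comment> \<open>Otherwise the vertices reachable from \<open>src e\<close> in \<open>F - {e}\<close> have odd degree sum.\<close>
  have "(src e, tgt e) \<in> reach ?F' src tgt"
  proof (rule ccontr)
    assume disconnected: "(src e, tgt e) \<notin> reach ?F' src tgt"
    define S where "S = {x\<in>K. (src e, x) \<in> reach ?F' src tgt}"
    have "finite S"
      using \<open>finite K\<close> unfolding S_def by simp
    have src_in: "src e \<in> S"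
      using ends e reach_refl unfolding S_def by blast
    have closed: "\<forall>g\<in>?F'. src g \<in> S \<longleftrightarrow> tgt g \<in> S"
    proof
      fix g assume g: "g \<in> ?F'"
      then have "src g \<in> K" "tgt g \<in> K"
        using ends by auto
      with reach_edge[OF g] reach_trans show "src g \<in> S \<longleftrightarrow> tgt g \<in> S"
        unfolding S_def by blast
    qed
    have degree: "degree ?F' src tgt x = (if x = src e then 1 else 2)" if "x \<in> S" for x
    proof -
      have "x \<in> K" "x \<noteq> tgt e"
        using that disconnected unfolding S_def by auto
      then have "e \<in> incident F x \<longleftrightarrow> x = src e"
        using e unfolding incident_def by auto
      moreover have "degree ?F' src tgt x = card (incident F x - {e})"
        using degree_eq_card_incident[of ?F' x] \<open>finite F\<close> \<open>loopless F\<close> incident_Diff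
        unfolding loopless_def by simp
      moreover have "card (incident F x) = 2"
        using regular \<open>x \<in> K\<close> by blast
      ultimately show ?thesis
        by (cases "x = src e") (simp_all add: card_Diff_singleton_if)
    qed
    have "(\<Sum>x\<in>S. degree ?F' src tgt x)
        = degree ?F' src tgt (src e) + (\<Sum>x\<in>S - {src e}. degree ?F' src tgt x)"
      by (rule sum.remove[OF \<open>finite S\<close> src_in])
    also have "\<dots> = 1 + (\<Sum>x\<in>S - {src e}. 2)"
      using degree src_in by (simp add: sum.cong[OF refl, of "S - {src e}"])
    finally have "odd (\<Sum>x\<in>S. degree ?F' src tgt x)"
      by simp
    moreover have "even (\<Sum>x\<in>S. degree ?F' src tgt x)"
      using even_degree_sum_closed[OF _ \<open>finite S\<close> closed] \<open>finite F\<close> by simp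
    ultimately show False by simp
  qed
  then have "reach F src tgt = reach ?F' src tgt"
    by (rule reach_remove_edge[OF e])
  then show ?thesis
    using conn unfolding connected_graph_def by simp
qed

definition degree2_cover :: "'e set \<Rightarrow> 'v set \<Rightarrow> bool" where
  "degree2_cover F J \<longleftrightarrow> (\<forall>x\<in>J. card (incident F x) = 2) \<and> (\<forall>e\<in>F. src e \<in> J \<or> tgt e \<in> J)"

lemma card_incident_Diff_le:
  assumes "finite F" and bound: "card (incident F x) \<le> 2" and "g \<in> incident F x" and "g \<in> X"
  shows "card (incident (F - X) x) \<le> 1"
proof -
  have "incident (F - X) x \<subseteq> incident F x - {g}"
    using \<open>g \<in> X\<close> unfolding incident_def by auto
  then have "card (incident (F - X) x) \<le> card (incident F x - {g})"
    by (rule card_mono[rotated]) (simp add: finite_incident[OF \<open>finite F\<close>])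
  also have "\<dots> = card (incident F x) - 1"
    using \<open>g \<in> incident F x\<close> by (simp add: finite_incident[OF \<open>finite F\<close>])
  finally show ?thesis
    using bound by linarith
qed

lemma degree2_cover_insert:
  assumes cover: "degree2_cover (F - {e, e'}) J"
    and "finite F" "loopless F" and bound: "\<forall>x. card (incident F x) \<le> 2"
    and at_u: "incident F u = {e, e'}" and "e \<noteq> e'"
  shows "degree2_cover F (insert u J)"
    and "induced_edges F src tgt (insert u J) = induced_edges (F - {e, e'}) src tgt J"
proof -
  let ?F' = "F - {e, e'}"
  have ends_not_in_J: "src g \<notin> J \<and> tgt g \<notin> J" if g: "g \<in> {e, e'}" for g
  proof -
    have "g \<in> F"
      using g at_u unfolding incident_def by blast
    then have "g \<in> incident F (src g)" "g \<in> incident F (tgt g)"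
      unfolding incident_def by auto
    then have "card (incident ?F' (src g)) \<le> 1" "card (incident ?F' (tgt g)) \<le> 1"
      using card_incident_Diff_le[OF \<open>finite F\<close> bound[rule_format]] g by blast+
    then show ?thesis
      using cover unfolding degree2_cover_def by fastforce
  qed
  have e_ends: "(src g = u \<and> tgt g \<noteq> u) \<or> (tgt g = u \<and> src g \<noteq> u)" if "g \<in> {e, e'}" for g
    using that at_u \<open>loopless F\<close> unfolding incident_def loopless_def by blast
  have off_u: "src g \<noteq> u \<and> tgt g \<noteq> u" if "g \<in> ?F'" for g
    using that at_u unfolding incident_def by blast
  show "degree2_cover F (insert u J)"
    unfolding degree2_cover_def
  proof (intro conjI ballI)
    fix x
    assume "x \<in> insert u J"
    then show "card (incident F x) = 2"
    proof
      assume "x = u"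
      then show ?thesis using at_u \<open>e \<noteq> e'\<close> by simp
    next
      assume "x \<in> J"
      then have "card (incident ?F' x) = 2"
        using cover unfolding degree2_cover_def by blast
      moreover have "card (incident ?F' x) \<le> card (incident F x)"
        by (intro card_mono finite_incident incident_mono) (use \<open>finite F\<close> in auto)
      ultimately show ?thesis
        using bound by (metis le_antisym)
    qed
  next
    fix g
    assume "g \<in> F"
    show "src g \<in> insert u J \<or> tgt g \<in> insert u J"
    proof (cases "g \<in> {e, e'}")
      case True
      then show ?thesis using e_ends[OF True] by auto
    next
      case False
      then have "g \<in> ?F'" using \<open>g \<in> F\<close> by blast
      then show ?thesis using cover unfolding degree2_cover_def by blast
    qed
  qed
  show "induced_edges F src tgt (insert u J) = induced_edges ?F' src tgt J"
  proof (intro equalityI subsetI)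
    fix g
    assume "g \<in> induced_edges F src tgt (insert u J)"
    then have g: "g \<in> F" "src g \<in> insert u J" "tgt g \<in> insert u J"
      unfolding induced_edges_def by auto
    have "g \<notin> {e, e'}"
    proof
      assume "g \<in> {e, e'}"
      with e_ends ends_not_in_J g(2,3) show False by auto
    qed
    with g off_u show "g \<in> induced_edges ?F' src tgt J"
      unfolding induced_edges_def by auto
  next
    fix g
    assume "g \<in> induced_edges ?F' src tgt J"
    then show "g \<in> induced_edges F src tgt (insert u J)"
      unfolding induced_edges_def by blast
  qed
qed

lemma degree2_cover_three_edges:
  assumes "finite F" "loopless F" and bound: "\<forall>x. card (incident F x) \<le> 2"
    and at_u: "incident F u = {e, e'}" and "e \<noteq> e'" and rest: "F - {e, e'} = {f}"
    and "w \<noteq> u" and e'_at_w: "src e' = w \<or> tgt e' = w" and f_at_w: "src f = w \<or> tgt f = w"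
  shows "degree2_cover F {u, w}" and "induced_edges F src tgt {u, w} = {e'}"
proof -
  have F: "F = {e, e', f}" and f: "f \<noteq> e" "f \<noteq> e'"
    using rest at_u unfolding incident_def by auto
  have at_w: "incident F w = {e', f}"
  proof (rule card_seteq[symmetric])
    show "{e', f} \<subseteq> incident F w"
      using F e'_at_w f_at_w unfolding incident_def by auto
    show "card (incident F w) \<le> card {e', f}"
      using bound[rule_format, of w] f by simp
  qed (simp add: finite_incident \<open>finite F\<close>)
  have "e \<in> incident F u" "e' \<in> incident F u" "e \<notin> incident F w" "f \<notin> incident F u"
    using at_u at_w f \<open>e \<noteq> e'\<close> by auto
  then have e: "src e = u \<or> tgt e = u" "src e \<noteq> w \<and> tgt e \<noteq> w"
    and e': "src e' = u \<or> tgt e' = u" and f_off_u: "src f \<noteq> u \<and> tgt f \<noteq> u"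
    using F unfolding incident_def by auto
  have "src e \<noteq> tgt e" "src f \<noteq> tgt f"
    using F \<open>loopless F\<close> unfolding loopless_def by auto
  then have "e \<notin> induced_edges F src tgt {u, w}" "f \<notin> induced_edges F src tgt {u, w}"
    using e f_off_u f_at_w unfolding induced_edges_def by auto
  moreover have "e' \<in> induced_edges F src tgt {u, w}"
    using F e' e'_at_w \<open>w \<noteq> u\<close> unfolding induced_edges_def by auto
  moreover have "induced_edges F src tgt {u, w} \<subseteq> {e, e', f}"
    using F unfolding induced_edges_def by blast
  ultimately show "induced_edges F src tgt {u, w} = {e'}"
    by blast
  show "degree2_cover F {u, w}"
    unfolding degree2_cover_def
  proof (intro conjI ballI)
    fix x
    assume "x \<in> {u, w}"
    then show "card (incident F x) = 2"
      using at_u at_w \<open>e \<noteq> e'\<close> f by auto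
  next
    fix g
    assume "g \<in> F"
    then show "src g \<in> {u, w} \<or> tgt g \<in> {u, w}"
      using F e e' f_at_w by auto
  qed
qed

lemma incident_other_end:
  assumes "g \<in> incident F u" and "loopless F"
  obtains w where "w \<noteq> u" and "(src g = u \<and> tgt g = w) \<or> (src g = w \<and> tgt g = u)"
proof (cases "src g = u")
  case True
  with assms show ?thesis
    using that[of "tgt g"] unfolding incident_def loopless_def by auto
next
  case False
  with assms show ?thesis
    using that[of "src g"] unfolding incident_def by auto
qed

lemma peel_at_leaf:
  assumes ends: "\<forall>g\<in>F. src g \<in> K \<and> tgt g \<in> K" and "loopless F"
    and conn: "connected_graph K F src tgt" and "finite F" and bound: "\<forall>x. card (incident F x) \<le> 2"
    and "2 \<le> card F" and leaf: "incident F v = {e}"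
  obtains u e' w K' where "incident F u = {e, e'}" "e \<noteq> e'" "u \<in> K" "w \<noteq> u"
    "src e' = w \<or> tgt e' = w" "w \<in> K'" "K' \<subseteq> K"
    "\<forall>g\<in>F - {e, e'}. src g \<in> K' \<and> tgt g \<in> K'" "connected_graph K' (F - {e, e'}) src tgt"
proof -
  have "e \<in> incident F v"
    using leaf by simp
  then obtain u where "u \<noteq> v" and e_ends: "(src e = v \<and> tgt e = u) \<or> (src e = u \<and> tgt e = v)"
    using \<open>loopless F\<close> by (rule incident_other_end)
  have "e \<in> F"
    using leaf unfolding incident_def by blast
  then have "u \<in> K" and e_at_u: "e \<in> incident F u"
    using ends e_ends unfolding incident_def by auto
  have ends1: "\<forall>g\<in>F - {e}. src g \<in> K - {v} \<and> tgt g \<in> K - {v}"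
    using ends leaf unfolding incident_def by blast
  have loopless1: "loopless (F - {e})"
    using \<open>loopless F\<close> unfolding loopless_def by blast
  have conn1: "connected_graph (K - {v}) (F - {e}) src tgt"
    using connected_graph_remove_leaf[OF ends \<open>loopless F\<close> conn leaf] \<open>u \<in> K\<close> \<open>u \<noteq> v\<close>
    by blast
  have "F \<noteq> {e}"
    using \<open>2 \<le> card F\<close> by auto
  then have "F - {e} \<noteq> {}"
    using \<open>e \<in> F\<close> by blast
  then have "incident (F - {e}) u \<noteq> {}"
    using connected_graph_incident_nonempty_loopless[OF ends1 loopless1 conn1] \<open>u \<in> K\<close> \<open>u \<noteq> v\<close>
    by blast
  then obtain e' where "e' \<in> incident (F - {e}) u"
    by blast
  then have "e' \<noteq> e" and e'_at_u: "e' \<in> incident F u"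
    by (auto simp: incident_Diff)
  have at_u: "incident F u = {e, e'}"
  proof (rule card_seteq[symmetric])
    show "{e, e'} \<subseteq> incident F u"
      using e_at_u e'_at_u by blast
    show "card (incident F u) \<le> card {e, e'}"
      using bound[rule_format, of u] \<open>e' \<noteq> e\<close> by simp
  qed (simp add: finite_incident \<open>finite F\<close>)
  obtain w where "w \<noteq> u" and e'_ends: "(src e' = u \<and> tgt e' = w) \<or> (src e' = w \<and> tgt e' = u)"
    using e'_at_u \<open>loopless F\<close> by (rule incident_other_end)
  have "e' \<in> F"
    using e'_at_u unfolding incident_def by blast
  have "w \<noteq> v"
  proof
    assume "w = v"
    then have "e' \<in> incident F v"
      using \<open>e' \<in> F\<close> e'_ends unfolding incident_def by auto
    with leaf \<open>e' \<noteq> e\<close> show False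
      by simp
  qed
  have "w \<in> K"
    using ends \<open>e' \<in> F\<close> e'_ends by auto
  have leaf1: "incident (F - {e}) u = {e'}"
    using at_u \<open>e' \<noteq> e\<close> by (auto simp: incident_Diff)
  have "K - {v} \<noteq> {u}"
    using \<open>w \<in> K\<close> \<open>w \<noteq> u\<close> \<open>w \<noteq> v\<close> by blast
  from connected_graph_remove_leaf[OF ends1 loopless1 conn1 leaf1 this]
  have "connected_graph (K - {v} - {u}) (F - {e, e'}) src tgt"
    by (simp only: Diff_insert2[of F e "{e'}"])
  moreover have "\<forall>g\<in>F - {e, e'}. src g \<in> K - {v} - {u} \<and> tgt g \<in> K - {v} - {u}"
  proof
    fix g
    assume g: "g \<in> F - {e, e'}"
    then have "g \<notin> incident F u"
      using at_u by blast
    with g ends1 show "src g \<in> K - {v} - {u} \<and> tgt g \<in> K - {v} - {u}"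
      unfolding incident_def by blast
  qed
  moreover have "w \<in> K - {v} - {u}"
    using \<open>w \<in> K\<close> \<open>w \<noteq> u\<close> \<open>w \<noteq> v\<close> by blast
  moreover have "src e' = w \<or> tgt e' = w"
    using e'_ends by blast
  ultimately show thesis
    using that[OF at_u \<open>e' \<noteq> e\<close>[symmetric] \<open>u \<in> K\<close> \<open>w \<noteq> u\<close>, of "K - {v} - {u}"] by blast
qed

lemma peel_at_cycle:
  assumes "finite K" "finite F" and ends: "\<forall>g\<in>F. src g \<in> K \<and> tgt g \<in> K" and "loopless F"
    and conn: "connected_graph K F src tgt" and regular: "\<forall>x\<in>K. card (incident F x) = 2"
    and "e \<in> F"
  obtains u e' w K' where "incident F u = {e, e'}" "e \<noteq> e'" "u \<in> K" "w \<noteq> u"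
    "src e' = w \<or> tgt e' = w" "w \<in> K'" "K' \<subseteq> K"
    "\<forall>g\<in>F - {e, e'}. src g \<in> K' \<and> tgt g \<in> K'" "connected_graph K' (F - {e, e'}) src tgt"
proof -
  define u where "u = src e"
  have "u \<in> K" "tgt e \<in> K" "tgt e \<noteq> u"
    using ends \<open>loopless F\<close> \<open>e \<in> F\<close> unfolding u_def loopless_def by auto
  have e_at_u: "e \<in> incident F u"
    using \<open>e \<in> F\<close> unfolding u_def incident_def by simp
  have conn1: "connected_graph K (F - {e}) src tgt"
    using connected_graph_remove_edge_2_regular[OF assms(1-5) \<open>e \<in> F\<close> regular] .
  have "card (incident (F - {e}) u) = 1"
    using regular \<open>u \<in> K\<close> e_at_u by (simp add: incident_Diff finite_incident \<open>finite F\<close>)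
  then obtain e' where leaf1: "incident (F - {e}) u = {e'}"
    by (rule card_1_singletonE)
  then have "e' \<noteq> e" and at_u: "incident F u = {e, e'}"
    using e_at_u by (auto simp: incident_Diff)
  then have e'_at_u: "e' \<in> incident F u"
    by simp
  obtain w where "w \<noteq> u" and e'_ends: "(src e' = u \<and> tgt e' = w) \<or> (src e' = w \<and> tgt e' = u)"
    using e'_at_u \<open>loopless F\<close> by (rule incident_other_end)
  have "w \<in> K"
    using ends e'_at_u e'_ends unfolding incident_def by auto
  have ends1: "\<forall>g\<in>F - {e}. src g \<in> K \<and> tgt g \<in> K" and loopless1: "loopless (F - {e})"
    using ends \<open>loopless F\<close> unfolding loopless_def by auto
  have "K \<noteq> {u}"
    using \<open>tgt e \<in> K\<close> \<open>tgt e \<noteq> u\<close> by blast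
  from connected_graph_remove_leaf[OF ends1 loopless1 conn1 leaf1 this]
  have "connected_graph (K - {u}) (F - {e, e'}) src tgt"
    by (simp only: Diff_insert2[of F e "{e'}"])
  moreover have "\<forall>g\<in>F - {e, e'}. src g \<in> K - {u} \<and> tgt g \<in> K - {u}"
  proof
    fix g
    assume g: "g \<in> F - {e, e'}"
    then have "g \<notin> incident F u"
      using at_u by blast
    with g ends show "src g \<in> K - {u} \<and> tgt g \<in> K - {u}"
      unfolding incident_def by blast
  qed
  moreover have "w \<in> K - {u}"
    using \<open>w \<in> K\<close> \<open>w \<noteq> u\<close> by blast
  moreover have "src e' = w \<or> tgt e' = w"
    using e'_ends by blast
  ultimately show thesis
    using that[OF at_u \<open>e' \<noteq> e\<close>[symmetric] \<open>u \<in> K\<close> \<open>w \<noteq> u\<close>, of "K - {u}"] by blast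
qed

lemma peel_vertex:
  assumes "finite K" "finite F" and ends: "\<forall>g\<in>F. src g \<in> K \<and> tgt g \<in> K" and "loopless F"
    and conn: "connected_graph K F src tgt" and bound: "\<forall>x. card (incident F x) \<le> 2"
    and "2 \<le> card F"
  obtains u e e' w K' where "incident F u = {e, e'}" "e \<noteq> e'" "u \<in> K" "w \<noteq> u"
    "src e' = w \<or> tgt e' = w" "w \<in> K'" "K' \<subseteq> K"
    "\<forall>g\<in>F - {e, e'}. src g \<in> K' \<and> tgt g \<in> K'" "connected_graph K' (F - {e, e'}) src tgt"
proof (cases "\<exists>v. card (incident F v) = 1")
  case True
  then obtain v where "card (incident F v) = 1"
    by blast
  then obtain e where leaf: "incident F v = {e}"
    by (rule card_1_singletonE)
  show thesis
    by (rule peel_at_leaf[OF ends \<open>loopless F\<close> conn \<open>finite F\<close> bound \<open>2 \<le> card F\<close> leaf])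
      (rule that; assumption)
next
  case False
  have "F \<noteq> {}"
    using \<open>2 \<le> card F\<close> by auto
  have "\<forall>x\<in>K. card (incident F x) = 2"
  proof
    fix x
    assume "x \<in> K"
    then have "incident F x \<noteq> {}"
      using connected_graph_incident_nonempty_loopless[OF ends \<open>loopless F\<close> conn \<open>F \<noteq> {}\<close>] by blast
    then have "card (incident F x) \<noteq> 0"
      by (simp add: finite_incident \<open>finite F\<close>)
    moreover have "card (incident F x) \<noteq> 1" "card (incident F x) \<le> 2"
      using False bound by blast+
    ultimately show "card (incident F x) = 2"
      by linarith
  qed
  moreover obtain e where "e \<in> F"
    using \<open>F \<noteq> {}\<close> by blast
  ultimately show thesis
    by (rule peel_at_cycle[OF assms(1-5)]) (rule that; assumption)
qed

lemma exists_degree2_cover_connected: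
  assumes "finite K" "finite F" and "\<forall>g\<in>F. src g \<in> K \<and> tgt g \<in> K" and "loopless F"
    and "connected_graph K F src tgt" and "\<forall>x. card (incident F x) \<le> 2" and "card F \<noteq> 1"
  shows "\<exists>J\<subseteq>K. degree2_cover F J \<and> card (induced_edges F src tgt J) = card F mod 2"
  using assms
proof (induction "card F" arbitrary: K F rule: less_induct)
  case less
  note bound = less.prems(6)
  show ?case
  proof (cases "F = {}")
    case True
    then have "degree2_cover F {}" "induced_edges F src tgt {} = {}"
      unfolding degree2_cover_def induced_edges_def by simp_all
    with True show ?thesis
      by auto
  next
    case False
    then have "card F \<noteq> 0"
      using \<open>finite F\<close> by simp
    with \<open>card F \<noteq> 1\<close> have "2 \<le> card F"
      by linarith
    obtain u e e' w K' where at_u: "incident F u = {e, e'}" and "e \<noteq> e'" "u \<in> K" "w \<noteq> u"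
      and e'_at_w: "src e' = w \<or> tgt e' = w" and "w \<in> K'" "K' \<subseteq> K"
      and ends': "\<forall>g\<in>F - {e, e'}. src g \<in> K' \<and> tgt g \<in> K'"
      and conn': "connected_graph K' (F - {e, e'}) src tgt"
      by (rule peel_vertex[OF less.prems(1-6) \<open>2 \<le> card F\<close>])
    let ?F' = "F - {e, e'}"
    have "e \<in> F" "e' \<in> F"
      using at_u unfolding incident_def by auto
    then have card_F': "card ?F' = card F - 2"
      using \<open>finite F\<close> \<open>e \<noteq> e'\<close> by (simp add: card_Diff_subset)
    have "finite K'" "finite ?F'" "loopless ?F'"
      using \<open>finite K\<close> \<open>K' \<subseteq> K\<close> \<open>finite F\<close> \<open>loopless F\<close>
      by (auto simp: finite_subset loopless_def)
    have bound': "\<forall>x. card (incident ?F' x) \<le> 2"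
      using bound card_mono[OF finite_incident[OF \<open>finite F\<close>] incident_mono[of ?F' F]]
      by (meson Diff_subset order_trans)
    show ?thesis
    proof (cases "card ?F' = 1")
      \<comment> \<open>\<open>F\<close> is a path or a triangle with three edges; the induction hypothesis does not apply.\<close>
      case True
      then obtain f where rest: "?F' = {f}"
        by (rule card_1_singletonE)
      have "incident ?F' w \<noteq> {}"
        using connected_graph_incident_nonempty_loopless[OF ends' \<open>loopless ?F'\<close> conn'] rest \<open>w \<in> K'\<close>
        by blast
      then have f_at_w: "src f = w \<or> tgt f = w"
        using rest unfolding incident_def by auto
      note three = degree2_cover_three_edges[OF \<open>finite F\<close> \<open>loopless F\<close> bound at_u \<open>e \<noteq> e'\<close>
          rest \<open>w \<noteq> u\<close> e'_at_w f_at_w]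
      have "{u, w} \<subseteq> K"
        using \<open>u \<in> K\<close> \<open>w \<in> K'\<close> \<open>K' \<subseteq> K\<close> by blast
      moreover have "card F = 3"
        using True card_F' \<open>2 \<le> card F\<close> by linarith
      ultimately show ?thesis
        using three by (intro exI[of _ "{u, w}"]) simp
    next
      case False
      have "card ?F' < card F"
        using card_F' \<open>2 \<le> card F\<close> by simp
      then obtain J where "J \<subseteq> K'" and cover: "degree2_cover ?F' J"
        and card_J: "card (induced_edges ?F' src tgt J) = card ?F' mod 2"
        using less.hyps[OF _ \<open>finite K'\<close> \<open>finite ?F'\<close> ends' \<open>loopless ?F'\<close> conn' bound' False]
        by blast
      note insert = degree2_cover_insert[OF cover \<open>finite F\<close> \<open>loopless F\<close> bound at_u \<open>e \<noteq> e'\<close>]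
      have "insert u J \<subseteq> K"
        using \<open>J \<subseteq> K'\<close> \<open>K' \<subseteq> K\<close> \<open>u \<in> K\<close> by blast
      moreover have "card ?F' mod 2 = card F mod 2"
        using card_F' \<open>2 \<le> card F\<close> by (simp add: mod2_eq_if)
      ultimately show ?thesis
        using insert card_J by metis
    qed
  qed
qed

lemma components_conv: "components V F src tgt = (\<lambda>u. {v\<in>V. (u, v) \<in> reach F src tgt}) ` V"
  unfolding components_def by blast

lemma component_eq:
  assumes "K \<in> components V F src tgt" and "x \<in> K"
  shows "K = {y\<in>V. (x, y) \<in> reach F src tgt}"
proof -
  obtain u where K: "K = {v\<in>V. (u, v) \<in> reach F src tgt}"
    using assms(1) unfolding components_def by blast
  with assms(2) have "(u, x) \<in> reach F src tgt" "(x, u) \<in> reach F src tgt"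
    using reach_sym by auto
  then show ?thesis
    unfolding K using reach_trans by blast
qed

lemma component_edge_iff:
  assumes ends: "\<forall>e\<in>F. src e \<in> V \<and> tgt e \<in> V" and "K \<in> components V F src tgt" and "e \<in> F"
  shows "src e \<in> K \<longleftrightarrow> tgt e \<in> K"
proof -
  obtain u where K: "K = {v\<in>V. (u, v) \<in> reach F src tgt}"
    using assms(2) unfolding components_def by blast
  show ?thesis
    unfolding K using reach_edge[OF \<open>e \<in> F\<close>] reach_trans ends \<open>e \<in> F\<close> by blast
qed

lemma incident_induced_component:
  assumes "\<forall>e\<in>F. src e \<in> V \<and> tgt e \<in> V" and "K \<in> components V F src tgt" and "x \<in> K"
  shows "incident (induced_edges F src tgt K) x = incident F x"
  using component_edge_iff[OF assms(1,2)] assms(3) unfolding incident_def induced_edges_def by blast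

lemma connected_graph_component:
  assumes ends: "\<forall>e\<in>F. src e \<in> V \<and> tgt e \<in> V" and "K \<in> components V F src tgt"
  shows "connected_graph K (induced_edges F src tgt K) src tgt"
proof -
  obtain u where "u \<in> V" and K: "K = {v\<in>V. (u, v) \<in> reach F src tgt}"
    using assms(2) unfolding components_def by blast
  let ?F = "induced_edges F src tgt K"
  have "(u, x) \<in> reach ?F src tgt" if "(u, x) \<in> reach F src tgt" for x
    using that
  proof (induction rule: reach_induct)
    case base
    show ?case by (rule reach_refl)
  next
    case (step y z e)
    have "(y, z) \<in> reach F src tgt"
      using reach_edge[OF step.hyps(2)] step.hyps(3) by auto
    then have "(u, z) \<in> reach F src tgt"
      using step.hyps(1) by (rule reach_trans[rotated])
    with step.hyps ends have "e \<in> ?F"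
      unfolding K induced_edges_def by auto
    then have "(y, z) \<in> reach ?F src tgt"
      using reach_edge[of e ?F] step.hyps(3) by auto
    with step.IH show ?case
      by (rule reach_trans)
  qed
  then have from_u: "\<forall>x\<in>K. (u, x) \<in> reach ?F src tgt"
    unfolding K by blast
  have "u \<in> K"
    unfolding K using \<open>u \<in> V\<close> reach_refl by blast
  then show ?thesis
    unfolding connected_graph_def using from_u reach_sym reach_trans by blast
qed

lemma component_unique:
  assumes "K \<in> components V F src tgt" "K' \<in> components V F src tgt" "x \<in> K" "x \<in> K'"
  shows "K = K'"
  using component_eq[OF assms(1,3)] component_eq[OF assms(2,4)] by simp

lemma edge_in_component:
  assumes ends: "\<forall>e\<in>F. src e \<in> V \<and> tgt e \<in> V" and "e \<in> F"
  shows "\<exists>K\<in>components V F src tgt. e \<in> induced_edges F src tgt K"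
proof -
  let ?K = "{y\<in>V. (src e, y) \<in> reach F src tgt}"
  have "?K \<in> components V F src tgt"
    using ends \<open>e \<in> F\<close> unfolding components_def by blast
  moreover have "src e \<in> ?K"
    using ends \<open>e \<in> F\<close> reach_refl by blast
  ultimately show ?thesis
    using component_edge_iff[OF ends _ \<open>e \<in> F\<close>] \<open>e \<in> F\<close> unfolding induced_edges_def by blast
qed

lemma exists_degree2_cover_component:
  assumes "finite V" "finite C" and ends: "\<forall>e\<in>C. src e \<in> V \<and> tgt e \<in> V" and "loopless C"
    and bound: "\<forall>x. card (incident C x) \<le> 2" and K: "K \<in> components V C src tgt"
    and "card (induced_edges C src tgt K) \<noteq> 1"
  shows "\<exists>J\<subseteq>K. degree2_cover (induced_edges C src tgt K) J \<and>
    card (induced_edges (induced_edges C src tgt K) src tgt J) = card (induced_edges C src tgt K) mod 2"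
proof (rule exists_degree2_cover_connected)
  let ?C = "induced_edges C src tgt K"
  have "K \<subseteq> V"
    using K unfolding components_def by blast
  then show "finite K"
    using \<open>finite V\<close> by (rule finite_subset)
  show "finite ?C"
    using \<open>finite C\<close> unfolding induced_edges_def by simp
  show "\<forall>g\<in>?C. src g \<in> K \<and> tgt g \<in> K"
    unfolding induced_edges_def by blast
  show "loopless ?C"
    using \<open>loopless C\<close> unfolding loopless_def induced_edges_def by blast
  show "connected_graph K ?C src tgt"
    by (rule connected_graph_component[OF ends K])
  show "\<forall>x. card (incident ?C x) \<le> 2"
  proof
    fix x
    have "incident ?C x \<subseteq> incident C x"
      by (rule incident_mono) (auto simp: induced_edges_def)
    then have "card (incident ?C x) \<le> card (incident C x)"
      by (rule card_mono[OF finite_incident[OF \<open>finite C\<close>]])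
    with bound show "card (incident ?C x) \<le> 2"
      by (meson order_trans)
  qed
  show "card ?C \<noteq> 1"
    by fact
qed

lemma degree2_cover_Union_components:
  assumes ends: "\<forall>e\<in>C. src e \<in> V \<and> tgt e \<in> V"
    and JK: "\<forall>K\<in>components V C src tgt. JK K \<subseteq> K \<and> degree2_cover (induced_edges C src tgt K) (JK K)"
  defines "J \<equiv> \<Union>K\<in>components V C src tgt. JK K"
  shows "degree2_cover C J"
    and "induced_edges C src tgt J =
      (\<Union>K\<in>components V C src tgt. induced_edges (induced_edges C src tgt K) src tgt (JK K))"
proof -
  let ?comps = "components V C src tgt"
  let ?C = "\<lambda>K. induced_edges C src tgt K"
  have in_J: "x \<in> J \<longleftrightarrow> x \<in> JK K" if "K \<in> ?comps" "x \<in> K" for K x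
    using JK component_unique[OF that(1) _ that(2)] that(1) unfolding J_def by blast
  show "degree2_cover C J"
    unfolding degree2_cover_def
  proof (intro conjI ballI)
    fix x
    assume "x \<in> J"
    then obtain K where K: "K \<in> ?comps" "x \<in> JK K"
      unfolding J_def by blast
    then have "x \<in> K" "card (incident (?C K) x) = 2"
      using JK unfolding degree2_cover_def by blast+
    then show "card (incident C x) = 2"
      using incident_induced_component[OF ends K(1)] by simp
  next
    fix e
    assume "e \<in> C"
    then obtain K where K: "K \<in> ?comps" "e \<in> ?C K"
      using edge_in_component[OF ends] by blast
    then have "src e \<in> JK K \<or> tgt e \<in> JK K"
      using JK unfolding degree2_cover_def by blast
    then show "src e \<in> J \<or> tgt e \<in> J"
      using K(1) unfolding J_def by blast
  qed
  show "induced_edges C src tgt J = (\<Union>K\<in>?comps. induced_edges (?C K) src tgt (JK K))"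
  proof (intro equalityI subsetI)
    fix e
    assume e: "e \<in> induced_edges C src tgt J"
    then obtain K where K: "K \<in> ?comps" "e \<in> ?C K"
      using edge_in_component[OF ends] unfolding induced_edges_def by blast
    then have "src e \<in> JK K" "tgt e \<in> JK K"
      using e in_J[OF K(1)] unfolding induced_edges_def by auto
    with K show "e \<in> (\<Union>K\<in>?comps. induced_edges (?C K) src tgt (JK K))"
      unfolding induced_edges_def by blast
  next
    fix e
    assume "e \<in> (\<Union>K\<in>?comps. induced_edges (?C K) src tgt (JK K))"
    then show "e \<in> induced_edges C src tgt J"
      unfolding J_def induced_edges_def by blast
  qed
qed

lemma exists_degree2_cover:
  assumes "finite V" "finite C" and ends: "\<forall>e\<in>C. src e \<in> V \<and> tgt e \<in> V" and "loopless C"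
    and bound: "\<forall>x. card (incident C x) \<le> 2"
    and no_single_edge: "\<forall>K\<in>components V C src tgt. card (induced_edges C src tgt K) \<noteq> 1"
  shows "\<exists>J\<subseteq>V. degree2_cover C J \<and> card (induced_edges C src tgt J) =
           card {K\<in>components V C src tgt. odd (card (induced_edges C src tgt K))}"
proof -
  let ?comps = "components V C src tgt"
  let ?C = "\<lambda>K. induced_edges C src tgt K"
  obtain JK where JK: "\<And>K. K \<in> ?comps \<Longrightarrow> JK K \<subseteq> K \<and> degree2_cover (?C K) (JK K) \<and>
      card (induced_edges (?C K) src tgt (JK K)) = card (?C K) mod 2"
    using exists_degree2_cover_component[OF assms(1-5)] no_single_edge by metis
  define J where "J = (\<Union>K\<in>?comps. JK K)"
  have "J \<subseteq> V"
    using JK unfolding J_def components_def by blast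
  have finite_comps: "finite ?comps"
    using \<open>finite V\<close> unfolding components_conv by simp
  have "card (induced_edges C src tgt J) = card (\<Union>K\<in>?comps. induced_edges (?C K) src tgt (JK K))"
    using degree2_cover_Union_components(2)[OF ends] JK unfolding J_def by simp
  also have "\<dots> = (\<Sum>K\<in>?comps. card (induced_edges (?C K) src tgt (JK K)))"
  proof (rule card_UN_disjoint[OF finite_comps])
    show "\<forall>K\<in>?comps. finite (induced_edges (?C K) src tgt (JK K))"
      using \<open>finite C\<close> unfolding induced_edges_def by simp
    show "\<forall>K\<in>?comps. \<forall>K'\<in>?comps. K \<noteq> K' \<longrightarrow>
        induced_edges (?C K) src tgt (JK K) \<inter> induced_edges (?C K') src tgt (JK K') = {}"
      using component_unique unfolding induced_edges_def by blast
  qed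
  also have "\<dots> = (\<Sum>K\<in>?comps. if odd (card (?C K)) then 1 else 0)"
    using JK by (intro sum.cong) (simp_all add: mod2_eq_if)
  also have "\<dots> = card {K\<in>?comps. odd (card (?C K))}"
    using finite_comps by (simp add: sum.If_cases Int_def)
  finally show ?thesis
    using \<open>J \<subseteq> V\<close> degree2_cover_Union_components(1)[OF ends] JK unfolding J_def by blast
qed

lemma acyclic_graph_loopless: "acyclic_graph F src tgt \<Longrightarrow> loopless F"
  unfolding acyclic_graph_def loopless_def using reach_refl by metis

lemma acyclic_graph_subset:
  assumes "acyclic_graph F src tgt" and "F' \<subseteq> F"
  shows "acyclic_graph F' src tgt"
  unfolding acyclic_graph_def
proof
  fix e
  assume "e \<in> F'"
  then have "(src e, tgt e) \<notin> reach (F - {e}) src tgt"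
    using assms unfolding acyclic_graph_def by blast
  moreover have "reach (F' - {e}) src tgt \<subseteq> reach (F - {e}) src tgt"
    using \<open>F' \<subseteq> F\<close> by (intro reach_mono) blast
  ultimately show "(src e, tgt e) \<notin> reach (F' - {e}) src tgt"
    by blast
qed

lemma connected_graph_incident_nonempty_card:
  assumes "connected_graph V F src tgt" and "x \<in> V" and "2 \<le> card V"
  shows "incident F x \<noteq> {}"
proof -
  have "\<not> V \<subseteq> {x}"
  proof
    assume "V \<subseteq> {x}"
    then have "card V \<le> 1"
      using card_mono[of "{x}" V] by simp
    with \<open>2 \<le> card V\<close> show False
      by simp
  qed
  then obtain y where "y \<in> V" "y \<noteq> x"
    by blast
  with connected_graph_incident_nonempty[OF assms(1,2)] show ?thesis
    by blast
qed

lemma connected_graph_edge_between_leaves: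
  assumes conn: "connected_graph V F src tgt" and "f \<in> F" "src f \<in> V"
    and leaves: "incident F (src f) = {f}" "incident F (tgt f) = {f}"
  shows "V \<subseteq> {src f, tgt f}"
proof
  fix x
  assume "x \<in> V"
  with conn \<open>src f \<in> V\<close> have "(src f, x) \<in> reach F src tgt"
    unfolding connected_graph_def by blast
  then show "x \<in> {src f, tgt f}"
  proof (induction rule: reach_induct)
    case base
    show ?case by simp
  next
    case (step y z g)
    then have "g \<in> incident F y"
      unfolding incident_def by auto
    with step.IH leaves have "g = f"
      by auto
    with step.hyps(3) show ?case
      by auto
  qed
qed

lemma cotree_loop_component:
  assumes "finite E" "T \<subseteq> E" "v \<in> V" and degree: "degree E src tgt v \<le> 3"
    and tree_edge: "incident T v \<noteq> {}" and "e \<in> E - T" "src e = v" "tgt e = v"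
  shows "{v} \<in> components V (E - T) src tgt" and "induced_edges (E - T) src tgt {v} = {e}"
proof -
  obtain h where h: "h \<in> incident T v"
    using tree_edge by blast
  have "e \<in> {g\<in>E. src g = v \<and> tgt g = v}"
    using assms(6-8) by simp
  then have "card {g\<in>E. src g = v \<and> tgt g = v} \<noteq> 0"
    using \<open>finite E\<close> by auto
  then have "card (incident E v) \<le> 2"
    using degree degree_eq_card_incident_plus_loops[OF \<open>finite E\<close>, of v] by linarith
  moreover have "{e, h} \<subseteq> incident E v" and "e \<noteq> h"
    using h assms(2,6-8) unfolding incident_def by auto
  ultimately have "incident E v = {e, h}"
    using card_seteq[OF finite_incident[OF \<open>finite E\<close>]] by (metis card_2_iff)
  then have at_v: "incident (E - T) v = {e}"
    using h assms(6) unfolding incident_Diff incident_def by auto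
  have "y = v" if "(v, y) \<in> reach (E - T) src tgt" for y
    using that
  proof (induction rule: reach_induct)
    case base
    show ?case by (rule refl)
  next
    case (step y z g)
    then have "g \<in> incident (E - T) v"
      unfolding incident_def by auto
    with at_v step.hyps(3) \<open>src e = v\<close> \<open>tgt e = v\<close> show ?case
      by auto
  qed
  then have "{y\<in>V. (v, y) \<in> reach (E - T) src tgt} = {v}"
    using \<open>v \<in> V\<close> reach_refl by blast
  then show "{v} \<in> components V (E - T) src tgt"
    unfolding components_def using \<open>v \<in> V\<close> by blast
  have "induced_edges (E - T) src tgt {v} \<subseteq> incident (E - T) v"
    unfolding induced_edges_def incident_def by blast
  then show "induced_edges (E - T) src tgt {v} = {e}"
    using at_v assms(6-8) unfolding induced_edges_def by auto
qed

lemma coherent_stable_decycling_partition_of_leaf_cover: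
  assumes ends: "\<forall>e\<in>E. src e \<in> V \<and> tgt e \<in> V" and "finite E"
    and T: "spanning_tree V E src tgt T" and "2 < card V"
    and "J \<subseteq> V" "J \<noteq> {}" and leaves: "\<forall>x\<in>J. card (incident T x) = 1"
    and cover: "\<forall>e\<in>E - T. src e \<in> J \<or> tgt e \<in> J"
    and few: "card (induced_edges (E - T) src tgt J) \<le> 1"
  shows "coherent_stable_decycling_partition V E src tgt (V - J) J"
proof -
  have "T \<subseteq> E" and conn: "connected_graph V T src tgt" and acyclic: "acyclic_graph T src tgt"
    using T unfolding spanning_tree_def is_tree_def by auto
  have "loopless T"
    using acyclic by (rule acyclic_graph_loopless)
  have ends_T: "\<forall>e\<in>T. src e \<in> V \<and> tgt e \<in> V"
    using ends \<open>T \<subseteq> E\<close> by blast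
  have leaf: "incident T x = {f}" if "x \<in> J" "f \<in> incident T x" for x f
    using leaves that by (metis card_1_singletonE singletonD)
  have not_both: "\<not> (src f \<in> J \<and> tgt f \<in> J)" if "f \<in> T" for f
  proof
    assume "src f \<in> J \<and> tgt f \<in> J"
    with leaf \<open>f \<in> T\<close> have "incident T (src f) = {f}" "incident T (tgt f) = {f}"
      unfolding incident_def by auto
    with conn \<open>f \<in> T\<close> ends_T have "V \<subseteq> {src f, tgt f}"
      using connected_graph_edge_between_leaves by blast
    then have "card V \<le> card {src f, tgt f}"
      by (rule card_mono[rotated]) simp
    also have "\<dots> \<le> 2"
      by (rule card_insert_le_m1) simp_all
    finally show False
      using \<open>2 < card V\<close> by simp
  qed
  have "V - J \<noteq> {}"
  proof -
    obtain x where "x \<in> J"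
      using \<open>J \<noteq> {}\<close> by blast
    then obtain f where f: "f \<in> incident T x"
      using leaves by fastforce
    then have "f \<in> T"
      unfolding incident_def by blast
    with not_both ends_T show ?thesis
      by blast
  qed
  have "connected_graph (V - J) (induced_edges T src tgt (V - J)) src tgt"
    using connected_graph_remove_leaves[OF ends_T \<open>loopless T\<close> conn _ \<open>V - J \<noteq> {}\<close>] leaf
      leaves by (metis card_1_singletonE)
  moreover have "acyclic_graph (induced_edges T src tgt (V - J)) src tgt"
    using acyclic by (rule acyclic_graph_subset) (auto simp: induced_edges_def)
  moreover have "induced_edges E src tgt (V - J) = induced_edges T src tgt (V - J)"
    using cover \<open>T \<subseteq> E\<close> unfolding induced_edges_def by blast
  moreover have "induced_edges E src tgt J = induced_edges (E - T) src tgt J"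
    using not_both unfolding induced_edges_def by blast
  moreover have "finite (induced_edges (E - T) src tgt J)"
    using \<open>finite E\<close> unfolding induced_edges_def by simp
  ultimately show ?thesis
    using \<open>J \<subseteq> V\<close> \<open>J \<noteq> {}\<close> \<open>V - J \<noteq> {}\<close> few
    unfolding coherent_stable_decycling_partition_def is_tree_def independent_set_def
      near_independent_set_def
    by (auto simp: le_Suc_eq)
qed

lemma no_single_edge_cotree_component:
  assumes "odd_cotree_components V E src tgt T = {K0}"
    and "3 \<le> card (induced_edges (E - T) src tgt K0)"
  shows "\<forall>K\<in>components V (E - T) src tgt. card (induced_edges (E - T) src tgt K) \<noteq> 1"
proof (intro ballI notI)
  fix K
  assume "K \<in> components V (E - T) src tgt" and one: "card (induced_edges (E - T) src tgt K) = 1"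
  then have "K \<in> odd_cotree_components V E src tgt T"
    unfolding odd_cotree_components_def by simp
  with assms one show False
    by simp
qed

lemma cubic_cotree_leaf_cover:
  assumes "multigraph V E src tgt" and cubic: "cubic V E src tgt"
    and T: "spanning_tree V E src tgt T" and "2 \<le> card V"
    and no_single_edge: "\<forall>K\<in>components V (E - T) src tgt. card (induced_edges (E - T) src tgt K) \<noteq> 1"
  shows "\<exists>J\<subseteq>V. (\<forall>x\<in>J. card (incident T x) = 1) \<and> (\<forall>e\<in>E - T. src e \<in> J \<or> tgt e \<in> J) \<and>
           card (induced_edges (E - T) src tgt J) = card (odd_cotree_components V E src tgt T)"
proof -
  have "finite V" "finite E" and ends: "\<forall>e\<in>E. src e \<in> V \<and> tgt e \<in> V"
    using assms(1) unfolding multigraph_def by auto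
  have "T \<subseteq> E" and conn_T: "connected_graph V T src tgt" and "loopless T"
    using T acyclic_graph_loopless unfolding spanning_tree_def is_tree_def by auto
  have tree_edge: "incident T x \<noteq> {}" if "x \<in> V" for x
    using connected_graph_incident_nonempty_card[OF conn_T that \<open>2 \<le> card V\<close>] .
  have "loopless (E - T)"
    unfolding loopless_def
  proof (intro ballI notI)
    fix e
    assume e: "e \<in> E - T" and "src e = tgt e"
    then have "src e \<in> V"
      using ends by blast
    with cubic have "degree E src tgt (src e) \<le> 3"
      unfolding cubic_def by simp
    from cotree_loop_component[OF \<open>finite E\<close> \<open>T \<subseteq> E\<close> \<open>src e \<in> V\<close> this tree_edge[OF \<open>src e \<in> V\<close>]
        e refl \<open>src e = tgt e\<close>[symmetric]]
    show False
      using no_single_edge by auto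
  qed
  with \<open>loopless T\<close> have "loopless E"
    unfolding loopless_def by blast
  have three: "card (incident T x) + card (incident (E - T) x) = 3" if "x \<in> V" for x
    using card_incident_split[OF \<open>finite E\<close> \<open>T \<subseteq> E\<close>, of x] cubic that
      degree_eq_card_incident[OF \<open>finite E\<close> \<open>loopless E\<close>, of x]
    unfolding cubic_def by simp
  have "\<forall>x. card (incident (E - T) x) \<le> 2"
  proof
    fix x
    show "card (incident (E - T) x) \<le> 2"
    proof (cases "x \<in> V")
      case True
      have "finite T"
        using \<open>finite E\<close> \<open>T \<subseteq> E\<close> by (rule finite_subset[rotated])
      then have "card (incident T x) \<noteq> 0"
        using tree_edge[OF True] by (simp add: finite_incident)
      then show ?thesis
        using three[OF True] by linarith
    next
      case False
      then have "incident (E - T) x = {}"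
        using ends unfolding incident_def by blast
      then show ?thesis
        by simp
    qed
  qed
  from exists_degree2_cover[OF \<open>finite V\<close> _ _ \<open>loopless (E - T)\<close> this no_single_edge]
  obtain J where "J \<subseteq> V" and cover: "degree2_cover (E - T) J"
    and "card (induced_edges (E - T) src tgt J) = card (odd_cotree_components V E src tgt T)"
    using \<open>finite E\<close> ends unfolding odd_cotree_components_def by blast
  moreover have "\<forall>x\<in>J. card (incident T x) = 1"
    using cover three \<open>J \<subseteq> V\<close> unfolding degree2_cover_def by fastforce
  ultimately show ?thesis
    using cover unfolding degree2_cover_def by blast
qed

end

theorem corollary3:
  fixes V :: "'v set" and E :: "'e set" and src tgt :: "'e \<Rightarrow> 'v"
  assumes "multigraph V E src tgt"
    and "connected_graph V E src tgt"
    and "cubic V E src tgt"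
    and "card V mod 4 = 0"
    and "\<exists>T. xuong_tree V E src tgt T \<and>
           (\<exists>K. odd_cotree_components V E src tgt T = {K} \<and>
                card (induced_edges (E - T) src tgt K) \<ge> 3)"
  shows "\<exists>A J. coherent_stable_decycling_partition V E src tgt A J"
proof -
  obtain T K0 where "xuong_tree V E src tgt T"
    and odd_components: "odd_cotree_components V E src tgt T = {K0}"
    and big: "3 \<le> card (induced_edges (E - T) src tgt K0)"
    using assms(5) by blast
  then have T: "spanning_tree V E src tgt T"
    unfolding xuong_tree_def by blast
  have no_single_edge: "\<forall>K\<in>components V (E - T) src tgt. card (induced_edges (E - T) src tgt K) \<noteq> 1"
    using odd_components big by (rule no_single_edge_cotree_component)
  have "finite V" "finite E" and ends: "\<forall>e\<in>E. src e \<in> V \<and> tgt e \<in> V"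
    using assms(1) unfolding multigraph_def by auto
  have "V \<noteq> {}"
    using assms(2) unfolding connected_graph_def by blast
  \<comment> \<open>The divisibility hypothesis is only needed to exclude graphs with fewer than three vertices.\<close>
  with \<open>finite V\<close> have "0 < card V"
    by (simp add: card_gt_0_iff)
  with assms(4) have "4 \<le> card V"
    by presburger
  with cubic_cotree_leaf_cover[OF assms(1,3) T _ no_single_edge]
  obtain J where "J \<subseteq> V" and leaves: "\<forall>x\<in>J. card (incident src tgt T x) = 1"
    and cover: "\<forall>e\<in>E - T. src e \<in> J \<or> tgt e \<in> J"
    and one_edge: "card (induced_edges (E - T) src tgt J) = 1"
    using odd_components by auto
  then have "J \<noteq> {}"
    unfolding induced_edges_def by auto
  with coherent_stable_decycling_partition_of_leaf_cover[OF ends \<open>finite E\<close> T _ \<open>J \<subseteq> V\<close>]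
  show ?thesis
    using leaves cover one_edge \<open>4 \<le> card V\<close> by fastforce
qed

end
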